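(* Let $X\in G$ with $X\in USS(X)$ and $\ell(X)>0$, and let $s$ be a minimal simple element for $X$ such that $\varphi(X)s$ is left weighted (in left normal form as written). Then $s\preccurlyeq\iota(X)$.
   Context: $G$ is a Garside group: it has a lattice order $\preccurlyeq$ invariant under left multiplication ($a\preccurlyeq b$ iff $a^{-1}b\in P$, where $P=\{p\in G:1\preccurlyeq p\}$), with meet $\wedge$; there is a Garside element $\Delta\in P$ such that $[1,\Delta]$ is finite and generates $G$ and $\Delta^{-1}P\Delta=P$; and $P$ is atomic. Elements of $[1,\Delta]$ are simple. $\tau(x)=\Delta^{-1}x\Delta$; $\partial(u)=u^{-1}\Delta$ for simple $u$; $X^a=a^{-1}Xa$. Left normal form $X=\Delta^p x_1\cdots x_r$: $p$ maximal with $\Delta^p\preccurlyeq X$, each $x_i\neq 1$ the maximal simple prefix of $x_i\cdots x_r$; $\inf X=p$, $\sup X=p+r$, $\ell(X)=r$. Simple $a,b$ are left weighted if $ab$ is in left normal form as written. $\iota(X)=\tau^{-p}(x_1)$, $\varphi(X)=x_r$ for $r>0$. $\mathbf c(X)=X^{\iota(X)}$. $SSS(X)$: conjugates of $X$ of maximal infimum and minimal supremum; $USS(X)$: those $Y\in SSS(X)$ with $\mathbf c^m(Y)=Y$ for some $m>0$. A minimal simple element for $Y\in USS(X)$ is a simple $s\neq1$ with $Y^s\in USS(X)$ such that no prefix $t\ne1$, $t\neq s$ of $s$ has $Y^t\in USS(X)$. *)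

theory Defs
  imports "HOL-Algebra.Generated_Groups"
begin

definition gprec :: "('a,'b) monoid_scheme \<Rightarrow> 'a set \<Rightarrow> 'a \<Rightarrow> 'a \<Rightarrow> bool" where
  "gprec G P a b \<longleftrightarrow> a \<in> carrier G \<and> b \<in> carrier G \<and> inv\<^bsub>G\<^esub> a \<otimes>\<^bsub>G\<^esub> b \<in> P"

definition lprod :: "('a,'b) monoid_scheme \<Rightarrow> 'a list \<Rightarrow> 'a" where
  "lprod G xs = foldr (\<lambda>x y. x \<otimes>\<^bsub>G\<^esub> y) xs \<one>\<^bsub>G\<^esub>"

definition simple :: "('a,'b) monoid_scheme \<Rightarrow> 'a set \<Rightarrow> 'a \<Rightarrow> 'a \<Rightarrow> bool" where
  "simple G P D u \<longleftrightarrow> gprec G P \<one>\<^bsub>G\<^esub> u \<and> gprec G P u D"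

definition garside :: "('a,'b) monoid_scheme \<Rightarrow> 'a set \<Rightarrow> 'a \<Rightarrow> bool" where
  "garside G P D \<longleftrightarrow>
     group G \<and> P \<subseteq> carrier G \<and>
     \<comment> \<open>the relation is a partial order on G\<close>
     (\<forall>a\<in>carrier G. gprec G P a a) \<and>
     (\<forall>a b c. gprec G P a b \<and> gprec G P b c \<longrightarrow> gprec G P a c) \<and>
     (\<forall>a b. gprec G P a b \<and> gprec G P b a \<longrightarrow> a = b) \<and>
     \<comment> \<open>which is a lattice (meets and joins exist)\<close>
     (\<forall>a\<in>carrier G. \<forall>b\<in>carrier G. \<exists>m. gprec G P m a \<and> gprec G P m b \<and>
          (\<forall>c. gprec G P c a \<and> gprec G P c b \<longrightarrow> gprec G P c m)) \<and>
     (\<forall>a\<in>carrier G. \<forall>b\<in>carrier G. \<exists>j. gprec G P a j \<and> gprec G P b j \<and>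
          (\<forall>c. gprec G P a c \<and> gprec G P b c \<longrightarrow> gprec G P j c)) \<and>
     \<comment> \<open>Garside element\<close>
     D \<in> P \<and>
     finite {u. simple G P D u} \<and>
     generate G {u. simple G P D u} = carrier G \<and>
     {inv\<^bsub>G\<^esub> D \<otimes>\<^bsub>G\<^esub> p \<otimes>\<^bsub>G\<^esub> D | p. p \<in> P} = P \<and>
     \<comment> \<open>P is atomic\<close>
     (\<forall>x\<in>P. \<exists>N::nat. \<forall>xs. set xs \<subseteq> P - {\<one>\<^bsub>G\<^esub>} \<and> lprod G xs = x \<longrightarrow> length xs \<le> N)"

definition tau_pow :: "('a,'b) monoid_scheme \<Rightarrow> 'a \<Rightarrow> int \<Rightarrow> 'a \<Rightarrow> 'a" where
  "tau_pow G D k x = inv\<^bsub>G\<^esub> (D [^]\<^bsub>G\<^esub> k) \<otimes>\<^bsub>G\<^esub> x \<otimes>\<^bsub>G\<^esub> (D [^]\<^bsub>G\<^esub> k)"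

definition conj :: "('a,'b) monoid_scheme \<Rightarrow> 'a \<Rightarrow> 'a \<Rightarrow> 'a" where
  "conj G X a = inv\<^bsub>G\<^esub> a \<otimes>\<^bsub>G\<^esub> X \<otimes>\<^bsub>G\<^esub> a"

definition lnf :: "('a,'b) monoid_scheme \<Rightarrow> 'a set \<Rightarrow> 'a \<Rightarrow> 'a \<Rightarrow> int \<Rightarrow> 'a list \<Rightarrow> bool" where
  "lnf G P D X p xs \<longleftrightarrow>
     X = (D [^]\<^bsub>G\<^esub> p) \<otimes>\<^bsub>G\<^esub> lprod G xs \<and>
     gprec G P (D [^]\<^bsub>G\<^esub> p) X \<and>
     (\<forall>q::int. gprec G P (D [^]\<^bsub>G\<^esub> q) X \<longrightarrow> q \<le> p) \<and>
     (\<forall>i<length xs. xs ! i \<noteq> \<one>\<^bsub>G\<^esub> \<and>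
        simple G P D (xs ! i) \<and> gprec G P (xs ! i) (lprod G (drop i xs)) \<and>
        (\<forall>u. simple G P D u \<and> gprec G P u (lprod G (drop i xs)) \<longrightarrow> gprec G P u (xs ! i)))"

definition nf :: "('a,'b) monoid_scheme \<Rightarrow> 'a set \<Rightarrow> 'a \<Rightarrow> 'a \<Rightarrow> int \<times> 'a list" where
  "nf G P D X = (THE (p, xs). lnf G P D X p xs)"

definition ginf :: "('a,'b) monoid_scheme \<Rightarrow> 'a set \<Rightarrow> 'a \<Rightarrow> 'a \<Rightarrow> int" where
  "ginf G P D X = fst (nf G P D X)"

definition clen :: "('a,'b) monoid_scheme \<Rightarrow> 'a set \<Rightarrow> 'a \<Rightarrow> 'a \<Rightarrow> nat" where
  "clen G P D X = length (snd (nf G P D X))"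

definition gsup :: "('a,'b) monoid_scheme \<Rightarrow> 'a set \<Rightarrow> 'a \<Rightarrow> 'a \<Rightarrow> int" where
  "gsup G P D X = ginf G P D X + int (clen G P D X)"

definition iota :: "('a,'b) monoid_scheme \<Rightarrow> 'a set \<Rightarrow> 'a \<Rightarrow> 'a \<Rightarrow> 'a" where
  "iota G P D X = tau_pow G D (- ginf G P D X) (hd (snd (nf G P D X)))"

definition phi :: "('a,'b) monoid_scheme \<Rightarrow> 'a set \<Rightarrow> 'a \<Rightarrow> 'a \<Rightarrow> 'a" where
  "phi G P D X = last (snd (nf G P D X))"

definition cycling :: "('a,'b) monoid_scheme \<Rightarrow> 'a set \<Rightarrow> 'a \<Rightarrow> 'a \<Rightarrow> 'a" where
  "cycling G P D X = conj G X (iota G P D X)"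

definition left_weighted :: "('a,'b) monoid_scheme \<Rightarrow> 'a set \<Rightarrow> 'a \<Rightarrow> 'a \<Rightarrow> 'a \<Rightarrow> bool" where
  "left_weighted G P D a b \<longleftrightarrow> simple G P D a \<and> simple G P D b \<and>
      lnf G P D (a \<otimes>\<^bsub>G\<^esub> b) 0 [a, b]"

definition conj_class :: "('a,'b) monoid_scheme \<Rightarrow> 'a \<Rightarrow> 'a set" where
  "conj_class G X = {conj G X a | a. a \<in> carrier G}"

definition SSS :: "('a,'b) monoid_scheme \<Rightarrow> 'a set \<Rightarrow> 'a \<Rightarrow> 'a \<Rightarrow> 'a set" where
  "SSS G P D X = {Y \<in> conj_class G X. \<forall>Z \<in> conj_class G X.
       ginf G P D Z \<le> ginf G P D Y \<and> gsup G P D Y \<le> gsup G P D Z}"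

definition USS :: "('a,'b) monoid_scheme \<Rightarrow> 'a set \<Rightarrow> 'a \<Rightarrow> 'a \<Rightarrow> 'a set" where
  "USS G P D X = {Y \<in> SSS G P D X. \<exists>m>0. (cycling G P D ^^ m) Y = Y}"

definition minimal_simple :: "('a,'b) monoid_scheme \<Rightarrow> 'a set \<Rightarrow> 'a \<Rightarrow> 'a \<Rightarrow> 'a \<Rightarrow> 'a \<Rightarrow> bool" where
  "minimal_simple G P D X Y s \<longleftrightarrow>
     simple G P D s \<and> s \<noteq> \<one>\<^bsub>G\<^esub> \<and> conj G Y s \<in> USS G P D X \<and>
     (\<forall>t. gprec G P \<one>\<^bsub>G\<^esub> t \<and> gprec G P t s \<and> t \<noteq> \<one>\<^bsub>G\<^esub> \<and> t \<noteq> s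
          \<longrightarrow> conj G Y t \<notin> USS G P D X)"

end

theory Submission
  imports Defs
begin

text \<open>
  Write \<open>X = \<Delta>\<^sup>p x\<^sub>1 \<cdots> x\<^sub>r\<close> in left normal form. Since \<open>X\<^sup>s\<close> lies in the super summit set
  of \<open>X\<close>, its infimum is at least \<open>p\<close>, i.e. \<open>\<Delta>\<^sup>p \<preccurlyeq> s\<^sup>-\<^sup>1 X s\<close>; multiplying by \<open>s\<close> on the left
  shows that \<open>\<tau>\<^sup>p(s)\<close> is a simple prefix of \<open>x\<^sub>1 \<cdots> x\<^sub>r s\<close>. Left weightedness is a local
  condition, so since \<open>x\<^sub>r s\<close> is left weighted, \<open>x\<^sub>1 \<cdots> x\<^sub>r s\<close> is again in left normal form
  and its maximal simple prefix is \<open>x\<^sub>1\<close>. Hence \<open>\<tau>\<^sup>p(s) \<preccurlyeq> x\<^sub>1\<close>, that is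
  \<open>s \<preccurlyeq> \<tau>\<^sup>-\<^sup>p(x\<^sub>1) = \<iota>(X)\<close>.

  Because infimum, \<open>\<iota>\<close> and \<open>\<phi>\<close> are read off a definite description of the left normal form,
  one must also show that left normal forms exist and are unique. Existence rests on the
  bounds \<open>\<Delta>\<^sup>-\<^sup>k \<preccurlyeq> g \<preccurlyeq> \<Delta>\<^sup>k\<close> given by generation by simples, and on atomicity of \<open>P\<close>, which
  makes the greedy decomposition terminate.
\<close>

locale garside_group = group G for G :: "('a, 'b) monoid_scheme" (structure) +
  fixes P :: "'a set" and D :: 'a
  assumes garside: "garside G P D"
begin

abbreviation prec :: "'a \<Rightarrow> 'a \<Rightarrow> bool" (infix "\<preccurlyeq>" 50)
  where "a \<preccurlyeq> b \<equiv> gprec G P a b"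

lemma positive_subset_carrier: "P \<subseteq> carrier G"
  and garside_order:
    "\<forall>a\<in>carrier G. a \<preccurlyeq> a"
    "\<forall>a b c. a \<preccurlyeq> b \<and> b \<preccurlyeq> c \<longrightarrow> a \<preccurlyeq> c"
    "\<forall>a b. a \<preccurlyeq> b \<and> b \<preccurlyeq> a \<longrightarrow> a = b"
    "\<forall>a\<in>carrier G. \<forall>b\<in>carrier G.
       \<exists>m. m \<preccurlyeq> a \<and> m \<preccurlyeq> b \<and> (\<forall>c. c \<preccurlyeq> a \<and> c \<preccurlyeq> b \<longrightarrow> c \<preccurlyeq> m)"
  and Garside_positive: "D \<in> P"
  and simples_generate: "generate G {u. simple G P D u} = carrier G"
  and positive_conj_Garside: "{inv D \<otimes> p \<otimes> D | p. p \<in> P} = P"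
  and positive_atomic:
    "\<forall>x\<in>P. \<exists>N::nat. \<forall>xs. set xs \<subseteq> P - {\<one>} \<and> lprod G xs = x \<longrightarrow> length xs \<le> N"
  using garside unfolding garside_def by - (elim conjE, assumption)+

lemma prec_refl: "a \<in> carrier G \<Longrightarrow> a \<preccurlyeq> a"
  using garside_order(1) by blast

lemma prec_trans [trans]: "a \<preccurlyeq> b \<Longrightarrow> b \<preccurlyeq> c \<Longrightarrow> a \<preccurlyeq> c"
  using garside_order(2) by blast

lemma prec_antisym: "a \<preccurlyeq> b \<Longrightarrow> b \<preccurlyeq> a \<Longrightarrow> a = b"
  using garside_order(3) by blast

lemma meet_exists:
  "a \<in> carrier G \<Longrightarrow> b \<in> carrier G \<Longrightarrow>
     \<exists>m. m \<preccurlyeq> a \<and> m \<preccurlyeq> b \<and> (\<forall>c. c \<preccurlyeq> a \<and> c \<preccurlyeq> b \<longrightarrow> c \<preccurlyeq> m)"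
  using garside_order(4) by blast

lemma positive_closed: "x \<in> P \<Longrightarrow> x \<in> carrier G"
  using positive_subset_carrier by blast

lemma Garside_closed [simp]: "D \<in> carrier G"
  using Garside_positive by (rule positive_closed)

lemma inv_mult_cancel_left [simp]: "x \<in> carrier G \<Longrightarrow> y \<in> carrier G \<Longrightarrow> inv x \<otimes> (x \<otimes> y) = y"
  and mult_inv_cancel_left [simp]: "x \<in> carrier G \<Longrightarrow> y \<in> carrier G \<Longrightarrow> x \<otimes> (inv x \<otimes> y) = y"
  by (simp_all add: m_assoc[symmetric])

lemma one_prec_iff: "\<one> \<preccurlyeq> a \<longleftrightarrow> a \<in> P"
  using positive_closed by (auto simp: gprec_def)

lemma one_positive: "\<one> \<in> P"
  using prec_refl[of \<one>] by (simp add: gprec_def)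

lemma prec_mult_positive: "b \<in> carrier G \<Longrightarrow> a \<in> P \<Longrightarrow> b \<preccurlyeq> b \<otimes> a"
  using positive_closed by (simp add: gprec_def)

lemma positive_mult: "a \<in> P \<Longrightarrow> b \<in> P \<Longrightarrow> a \<otimes> b \<in> P"
  using prec_trans[of \<one> a "a \<otimes> b"] prec_mult_positive[of a b] positive_closed
  by (simp add: one_prec_iff)

lemma prec_lmult_iff:
  assumes "a \<in> carrier G" "b \<in> carrier G" "g \<in> carrier G"
  shows "g \<otimes> a \<preccurlyeq> g \<otimes> b \<longleftrightarrow> a \<preccurlyeq> b"
  using assms by (simp add: gprec_def inv_mult_group m_assoc)

lemma prec_lmult: "a \<preccurlyeq> b \<Longrightarrow> g \<in> carrier G \<Longrightarrow> g \<otimes> a \<preccurlyeq> g \<otimes> b"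
  by (metis gprec_def prec_lmult_iff)

lemma prec_one_eq: "a \<in> P \<Longrightarrow> a \<preccurlyeq> \<one> \<Longrightarrow> a = \<one>"
  using prec_antisym[of a \<one>] by (simp add: one_prec_iff)

lemma simple_iff: "simple G P D u \<longleftrightarrow> u \<in> P \<and> u \<preccurlyeq> D"
  by (simp add: simple_def one_prec_iff)

lemma Garside_neq_one: "simple G P D u \<Longrightarrow> u \<noteq> \<one> \<Longrightarrow> D \<noteq> \<one>"
  using prec_one_eq by (auto simp: simple_iff)

lemma Garside_conj_positive: "x \<in> P \<Longrightarrow> inv D \<otimes> x \<otimes> D \<in> P"
  using positive_conj_Garside by blast

lemma Garside_conj_inv_positive: "x \<in> P \<Longrightarrow> D \<otimes> x \<otimes> inv D \<in> P"
proof -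
  assume "x \<in> P"
  then obtain p where "p \<in> P" "x = inv D \<otimes> p \<otimes> D"
    using positive_conj_Garside by blast
  then show ?thesis
    using positive_closed by (simp add: m_assoc)
qed

lemma Garside_prec_mult_Garside: "x \<in> P \<Longrightarrow> D \<preccurlyeq> x \<otimes> D"
  using Garside_conj_positive positive_closed by (simp add: gprec_def m_assoc)

lemma tau_pow_closed [simp]: "x \<in> carrier G \<Longrightarrow> tau_pow G D k x \<in> carrier G"
  by (simp add: tau_pow_def)

lemma tau_pow_add:
  "x \<in> carrier G \<Longrightarrow> tau_pow G D (i + j) x = tau_pow G D j (tau_pow G D i x)"
  by (simp add: tau_pow_def int_pow_mult inv_mult_group m_assoc)

lemma tau_pow_neg_cancel [simp]:
  "x \<in> carrier G \<Longrightarrow> tau_pow G D (- k) (tau_pow G D k x) = x"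
  using tau_pow_add[of x k "- k"] by (simp add: tau_pow_def)

lemma tau_pow_one: "tau_pow G D 1 x = inv D \<otimes> x \<otimes> D"
  and tau_pow_minus_one: "tau_pow G D (- 1) x = D \<otimes> x \<otimes> inv D"
  by (simp_all add: tau_pow_def int_pow_neg)

lemma tau_pow_mult:
  "a \<in> carrier G \<Longrightarrow> b \<in> carrier G \<Longrightarrow>
     tau_pow G D k (a \<otimes> b) = tau_pow G D k a \<otimes> tau_pow G D k b"
  by (simp add: tau_pow_def m_assoc)

lemma tau_pow_inv: "a \<in> carrier G \<Longrightarrow> tau_pow G D k (inv a) = inv (tau_pow G D k a)"
  by (simp add: tau_pow_def inv_mult_group m_assoc)

lemma tau_pow_Garside [simp]: "tau_pow G D k D = D"
proof -
  have "D \<otimes> D [^] k = D [^] k \<otimes> D"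
    using int_pow_mult[of D k 1] int_pow_mult[of D 1 k] by (simp add: add.commute)
  then show ?thesis
    by (simp add: tau_pow_def m_assoc)
qed

lemma mult_Garside_pow: "a \<in> carrier G \<Longrightarrow> a \<otimes> D [^] k = D [^] k \<otimes> tau_pow G D k a"
  by (simp add: tau_pow_def m_assoc)

lemma tau_pow_positive:
  assumes "x \<in> P"
  shows "tau_pow G D k x \<in> P"
proof (induction k rule: int_induct[where k = 0])
  case base
  show ?case
    using assms positive_closed by (simp add: tau_pow_def)
next
  case (step1 i)
  then show ?case
    using assms positive_closed Garside_conj_positive by (simp add: tau_pow_add tau_pow_one)
next
  case (step2 i)
  then show ?case
    using assms positive_closed Garside_conj_inv_positive tau_pow_add[of x i "- 1"]
    by (simp add: tau_pow_minus_one)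
qed

lemma tau_pow_mono: "a \<preccurlyeq> b \<Longrightarrow> tau_pow G D k a \<preccurlyeq> tau_pow G D k b"
  using tau_pow_positive[of "inv a \<otimes> b" k] by (simp add: gprec_def tau_pow_mult tau_pow_inv)

lemma tau_pow_simple: "simple G P D u \<Longrightarrow> simple G P D (tau_pow G D k u)"
  using tau_pow_positive tau_pow_mono[of u D k] by (simp add: simple_iff)

lemma prec_rmult_Garside_pow: "a \<preccurlyeq> b \<Longrightarrow> a \<otimes> D [^] (k::int) \<preccurlyeq> b \<otimes> D [^] k"
proof -
  assume ab: "a \<preccurlyeq> b"
  then have "a \<in> carrier G" "b \<in> carrier G"
    by (simp_all add: gprec_def)
  moreover have "D [^] k \<otimes> tau_pow G D k a \<preccurlyeq> D [^] k \<otimes> tau_pow G D k b"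
    using ab by (intro prec_lmult tau_pow_mono) simp_all
  ultimately show ?thesis
    by (simp add: mult_Garside_pow)
qed

lemma Garside_pow_nat_positive: "D [^] (n::nat) \<in> P"
  by (induction n) (simp_all add: one_positive positive_mult Garside_positive)

lemma Garside_pow_mono: "q \<le> q' \<Longrightarrow> D [^] (q::int) \<preccurlyeq> D [^] q'"
proof -
  assume "q \<le> q'"
  have "inv (D [^] q) \<otimes> D [^] q' = D [^] (q' - q)"
    using int_pow_mult[of D "- q" q'] by (simp add: int_pow_neg)
  also have "\<dots> = D [^] nat (q' - q)"
    using pow_nat \<open>q \<le> q'\<close> by simp
  finally show ?thesis
    using Garside_pow_nat_positive by (simp add: gprec_def)
qed

lemma Garside_pow_prec_imp_le:
  assumes "D \<noteq> \<one>" and "D [^] (q::int) \<preccurlyeq> D [^] q'"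
  shows "q \<le> q'"
proof (rule ccontr)
  assume "\<not> q \<le> q'"
  then have "D [^] (q' + 1) \<preccurlyeq> D [^] q"
    by (intro Garside_pow_mono) simp
  then have "D [^] q' \<otimes> D \<preccurlyeq> D [^] q"
    by (simp add: int_pow_mult)
  also note assms(2)
  finally have "D \<preccurlyeq> \<one>"
    using prec_lmult_iff[of D \<one> "D [^] q'"] by simp
  then show False
    using assms(1) prec_one_eq Garside_positive by blast
qed

lemma Garside_pow_bounds:
  assumes "g \<in> carrier G"
  shows "\<exists>k::int. 0 \<le> k \<and> D [^] (- k) \<preccurlyeq> g \<and> g \<preccurlyeq> D [^] k"
proof -
  have "g \<in> generate G {u. simple G P D u}"
    using assms simples_generate by simp
  then show ?thesis
  proof (induction rule: generate.induct)
    case one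
    show ?case
      by (intro exI[of _ 0]) (simp add: prec_refl)
  next
    case (incl h)
    then have h: "h \<in> P" "h \<preccurlyeq> D"
      by (simp_all add: simple_iff)
    then have "inv D \<preccurlyeq> h"
      using positive_closed by (simp add: gprec_def positive_mult Garside_positive)
    then show ?case
      using h by (intro exI[of _ 1]) (simp add: int_pow_neg)
  next
    case (inv h)
    then have h: "h \<in> P" "inv h \<otimes> D \<in> P"
      by (simp_all add: simple_iff gprec_def)
    have "D \<otimes> inv h = D \<otimes> (inv h \<otimes> D) \<otimes> inv D"
      using h positive_closed by (simp add: m_assoc)
    then have "inv D \<preccurlyeq> inv h"
      using Garside_conj_inv_positive[OF h(2)] h positive_closed by (simp add: gprec_def)
    moreover have "inv h \<preccurlyeq> D"
      using h positive_mult Garside_positive positive_closed by (simp add: gprec_def)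
    ultimately show ?case
      by (intro exI[of _ 1]) (simp add: int_pow_neg)
  next
    case (eng h1 h2)
    then obtain k1 k2 :: int where k: "k1 \<ge> 0" "k2 \<ge> 0"
      and h1: "D [^] (- k1) \<preccurlyeq> h1" "h1 \<preccurlyeq> D [^] k1"
      and h2: "D [^] (- k2) \<preccurlyeq> h2" "h2 \<preccurlyeq> D [^] k2"
      by blast
    have "h1 \<in> carrier G"
      using h1 by (simp add: gprec_def)
    then have "h1 \<otimes> h2 \<preccurlyeq> h1 \<otimes> D [^] k2"
      using h2(2) by (rule prec_lmult[rotated])
    also have "\<dots> \<preccurlyeq> D [^] k1 \<otimes> D [^] k2"
      using h1(2) by (rule prec_rmult_Garside_pow)
    finally have upper: "h1 \<otimes> h2 \<preccurlyeq> D [^] (k1 + k2)"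
      by (simp add: int_pow_mult)
    have "D [^] (- (k1 + k2)) = D [^] (- k1) \<otimes> D [^] (- k2)"
      using int_pow_mult[of D "- k1" "- k2"] by simp
    also have "\<dots> \<preccurlyeq> h1 \<otimes> D [^] (- k2)"
      using h1(1) by (rule prec_rmult_Garside_pow)
    also have "\<dots> \<preccurlyeq> h1 \<otimes> h2"
      using h2(1) \<open>h1 \<in> carrier G\<close> by (rule prec_lmult)
    finally show ?case
      using upper k by (intro exI[of _ "k1 + k2"]) simp
  qed
qed

lemma Garside_pow_max_prefix_exists:
  assumes "D \<noteq> \<one>" and "X \<in> carrier G"
  shows "\<exists>p::int. D [^] p \<preccurlyeq> X \<and> (\<forall>q::int. D [^] q \<preccurlyeq> X \<longrightarrow> q \<le> p)"
proof -
  obtain k :: int where "k \<ge> 0" and lower: "D [^] (- k) \<preccurlyeq> X" and upper: "X \<preccurlyeq> D [^] k"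
    using Garside_pow_bounds assms(2) by blast
  have below: "q \<le> k" if "D [^] q \<preccurlyeq> X" for q :: int
    using Garside_pow_prec_imp_le[OF assms(1) prec_trans[OF that upper]] .
  define S where "S = {q. D [^] q \<preccurlyeq> X} \<inter> {- k..k}"
  have fin: "finite S" and low: "- k \<in> S"
    using lower \<open>k \<ge> 0\<close> by (auto simp: S_def)
  have "Max S \<in> S"
    using Max_in[OF fin] low by blast
  then have "D [^] Max S \<preccurlyeq> X"
    by (simp add: S_def)
  moreover have "q \<le> Max S" if "D [^] q \<preccurlyeq> X" for q :: int
    using Max_ge[OF fin, of q] Max_ge[OF fin low] below[OF that] that
    by (cases "- k \<le> q") (auto simp: S_def)
  ultimately show ?thesis
    by blast
qed

lemma eq_one_if_no_simple_prefix:
  assumes "b \<in> P" and "b \<preccurlyeq> D [^] (n::nat)" and "\<And>u. simple G P D u \<Longrightarrow> u \<preccurlyeq> b \<Longrightarrow> u = \<one>"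
  shows "b = \<one>"
  using assms
proof (induction n arbitrary: b)
  case 0
  then show ?case
    using prec_one_eq by simp
next
  case (Suc n)
  have b: "b \<in> carrier G"
    using Suc.prems(1) positive_closed by blast
  obtain m where m: "m \<preccurlyeq> b" "m \<preccurlyeq> D [^] n" "\<And>c. c \<preccurlyeq> b \<Longrightarrow> c \<preccurlyeq> D [^] n \<Longrightarrow> c \<preccurlyeq> m"
    using meet_exists[of b "D [^] n"] b by auto
  have "m \<in> P"
    using m(3) Suc.prems(1) Garside_pow_nat_positive by (simp add: one_prec_iff[symmetric])
  then have "m = \<one>"
    using Suc.IH m(1,2) Suc.prems(3) prec_trans by blast
  \<comment> \<open>\<open>b \<otimes> inv D\<close> lies below both \<open>b\<close> and \<open>D [^] n\<close>, hence below their meet \<open>\<one>\<close>,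
    and this says \<open>b \<preccurlyeq> D\<close>.\<close>
  define c where "c = b \<otimes> inv D"
  have "c \<preccurlyeq> b"
    using b Garside_positive by (simp add: c_def gprec_def inv_mult_group m_assoc)
  moreover have "inv b \<otimes> D [^] Suc n \<in> P"
    using Suc.prems(2) by (simp add: gprec_def)
  then have "D \<otimes> (inv b \<otimes> D [^] Suc n) \<otimes> inv D \<in> P"
    by (rule Garside_conj_inv_positive)
  then have "c \<preccurlyeq> D [^] n"
    using b by (simp add: c_def gprec_def inv_mult_group m_assoc)
  ultimately have "c \<preccurlyeq> \<one>"
    using m(3) \<open>m = \<one>\<close> by blast
  then have "D \<otimes> inv b \<in> P"
    using b by (simp add: c_def gprec_def inv_mult_group)
  then have "inv D \<otimes> (D \<otimes> inv b) \<otimes> D \<in> P"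
    by (rule Garside_conj_positive)
  then have "simple G P D b"
    using Suc.prems(1) b by (simp add: simple_iff gprec_def m_assoc)
  then show ?case
    using Suc.prems(3) prec_refl b by blast
qed

lemma exists_simple_prefix:
  assumes "b \<in> P" and "b \<noteq> \<one>"
  shows "\<exists>u. simple G P D u \<and> u \<noteq> \<one> \<and> u \<preccurlyeq> b"
proof -
  obtain k :: int where "k \<ge> 0" "b \<preccurlyeq> D [^] k"
    using Garside_pow_bounds assms(1) positive_closed by blast
  then have "b \<preccurlyeq> D [^] nat k"
    by (simp add: pow_nat)
  then show ?thesis
    using eq_one_if_no_simple_prefix assms by blast
qed

lemma lprod_Nil [simp]: "lprod G [] = \<one>"
  and lprod_Cons [simp]: "lprod G (x # xs) = x \<otimes> lprod G xs"
  by (simp_all add: lprod_def)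

lemma lprod_positive: "set xs \<subseteq> P \<Longrightarrow> lprod G xs \<in> P"
  by (induction xs) (simp_all add: one_positive positive_mult)

lemma lprod_snoc:
  "set xs \<subseteq> P \<Longrightarrow> y \<in> carrier G \<Longrightarrow> lprod G (xs @ [y]) = lprod G xs \<otimes> y"
  by (induction xs) (simp_all add: m_assoc positive_closed lprod_positive)

definition is_max_simple_prefix :: "'a \<Rightarrow> 'a \<Rightarrow> bool" where
  "is_max_simple_prefix x Y \<longleftrightarrow>
     simple G P D x \<and> x \<preccurlyeq> Y \<and> (\<forall>u. simple G P D u \<and> u \<preccurlyeq> Y \<longrightarrow> u \<preccurlyeq> x)"

lemma meet_Garside_is_max_simple_prefix:
  assumes "Y \<in> P" and "m \<preccurlyeq> Y" "m \<preccurlyeq> D" and "\<And>c. c \<preccurlyeq> Y \<Longrightarrow> c \<preccurlyeq> D \<Longrightarrow> c \<preccurlyeq> m"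
  shows "is_max_simple_prefix m Y"
  using assms Garside_positive by (auto simp: is_max_simple_prefix_def simple_iff one_prec_iff[symmetric])

lemma max_simple_prefix_exists: "Y \<in> P \<Longrightarrow> \<exists>x. is_max_simple_prefix x Y"
proof -
  assume "Y \<in> P"
  then obtain m where "m \<preccurlyeq> Y" "m \<preccurlyeq> D" "\<forall>c. c \<preccurlyeq> Y \<and> c \<preccurlyeq> D \<longrightarrow> c \<preccurlyeq> m"
    using meet_exists[of Y D] positive_closed by auto
  then show ?thesis
    using meet_Garside_is_max_simple_prefix \<open>Y \<in> P\<close> by blast
qed

lemma max_simple_prefix_unique:
  "is_max_simple_prefix x Y \<Longrightarrow> is_max_simple_prefix y Y \<Longrightarrow> x = y"
  by (simp add: is_max_simple_prefix_def prec_antisym)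

lemma prec_max_simple_prefix:
  assumes "Y \<in> P" and "is_max_simple_prefix x Y" and "c \<preccurlyeq> Y" "c \<preccurlyeq> D"
  shows "c \<preccurlyeq> x"
proof -
  obtain m where m: "m \<preccurlyeq> Y" "m \<preccurlyeq> D" "\<And>c. c \<preccurlyeq> Y \<Longrightarrow> c \<preccurlyeq> D \<Longrightarrow> c \<preccurlyeq> m"
    using meet_exists[of Y D] assms(1) positive_closed by auto
  then have "m = x"
    using meet_Garside_is_max_simple_prefix[OF assms(1)] max_simple_prefix_unique assms(2) by blast
  then show ?thesis
    using m(3) assms(3,4) by blast
qed

lemma max_simple_prefix_neq_one:
  assumes "Y \<in> P" "Y \<noteq> \<one>" and "is_max_simple_prefix x Y"
  shows "x \<noteq> \<one>"
proof
  assume "x = \<one>"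
  obtain u where "simple G P D u" "u \<noteq> \<one>" "u \<preccurlyeq> Y"
    using exists_simple_prefix assms(1,2) by blast
  then show False
    using assms(3) \<open>x = \<one>\<close> prec_one_eq by (auto simp: is_max_simple_prefix_def simple_iff)
qed

fun left_greedy :: "'a list \<Rightarrow> bool" where
  "left_greedy [] \<longleftrightarrow> True"
| "left_greedy (x # xs) \<longleftrightarrow>
     x \<noteq> \<one> \<and> is_max_simple_prefix x (x \<otimes> lprod G xs) \<and> left_greedy xs"

lemma left_greedy_positive: "left_greedy xs \<Longrightarrow> set xs \<subseteq> P"
  by (induction xs) (auto simp: is_max_simple_prefix_def simple_iff)

lemma left_greedy_hd: "xs \<noteq> [] \<Longrightarrow> left_greedy xs \<Longrightarrow> is_max_simple_prefix (hd xs) (lprod G xs)"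
  by (cases xs) simp_all

lemma left_greedy_exists_bounded:
  assumes "Y \<in> P" and "\<And>xs. set xs \<subseteq> P - {\<one>} \<Longrightarrow> lprod G xs = Y \<Longrightarrow> length xs \<le> N"
  shows "\<exists>xs. lprod G xs = Y \<and> left_greedy xs"
  using assms
proof (induction N arbitrary: Y)
  case 0
  have "Y = \<one>"
  proof (rule ccontr)
    assume "Y \<noteq> \<one>"
    then have "length [Y] \<le> 0"
      using 0 positive_closed by (intro 0(2)) simp_all
    then show False
      by simp
  qed
  then show ?case
    by (intro exI[of _ "[]"]) simp
next
  case (Suc N)
  show ?case
  proof (cases "Y = \<one>")
    case True
    then show ?thesis
      by (intro exI[of _ "[]"]) simp
  next
    case False
    obtain x where x: "is_max_simple_prefix x Y"
      using max_simple_prefix_exists Suc.prems(1) by blast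
    then have "x \<noteq> \<one>"
      using max_simple_prefix_neq_one Suc.prems(1) False by blast
    have "x \<in> P" "x \<preccurlyeq> Y"
      using x by (simp_all add: is_max_simple_prefix_def simple_iff)
    define Y' where "Y' = inv x \<otimes> Y"
    have "Y' \<in> P" "Y = x \<otimes> Y'"
      using \<open>x \<preccurlyeq> Y\<close> by (simp_all add: Y'_def gprec_def)
    have "length xs \<le> N" if "set xs \<subseteq> P - {\<one>}" "lprod G xs = Y'" for xs
      using Suc.prems(2)[of "x # xs"] that \<open>x \<in> P\<close> \<open>x \<noteq> \<one>\<close> \<open>Y = x \<otimes> Y'\<close> by simp
    then obtain xs where "lprod G xs = Y'" "left_greedy xs"
      using Suc.IH \<open>Y' \<in> P\<close> by blast
    then show ?thesis
      using x \<open>x \<noteq> \<one>\<close> \<open>Y = x \<otimes> Y'\<close> by (intro exI[of _ "x # xs"]) simp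
  qed
qed

lemma left_greedy_exists: "Y \<in> P \<Longrightarrow> \<exists>xs. lprod G xs = Y \<and> left_greedy xs"
  using positive_atomic left_greedy_exists_bounded by meson

lemma left_greedy_lprod_eq_one: "left_greedy xs \<Longrightarrow> lprod G xs = \<one> \<Longrightarrow> xs = []"
  by (cases xs) (auto simp: is_max_simple_prefix_def simple_iff prec_one_eq)

lemma left_greedy_unique:
  "left_greedy xs \<Longrightarrow> left_greedy ys \<Longrightarrow> lprod G xs = lprod G ys \<Longrightarrow> xs = ys"
proof (induction xs arbitrary: ys)
  case Nil
  then show ?case
    by (metis left_greedy_lprod_eq_one lprod_Nil)
next
  case (Cons x xs)
  obtain y ys' where ys: "ys = y # ys'"
    using Cons.prems left_greedy_lprod_eq_one[of "x # xs"] by (cases ys) auto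
  have "x = y"
    using Cons.prems ys max_simple_prefix_unique by auto
  moreover have "lprod G xs = lprod G ys'"
  proof -
    have "x \<in> carrier G" "lprod G xs \<in> carrier G" "lprod G ys' \<in> carrier G"
      using Cons.prems(1,2) ys left_greedy_positive lprod_positive positive_closed
      by (meson list.set_intros(1) set_subset_Cons subset_iff)+
    moreover have "inv x \<otimes> (x \<otimes> lprod G xs) = inv x \<otimes> (x \<otimes> lprod G ys')"
      using Cons.prems(3) ys \<open>x = y\<close> by simp
    ultimately show ?thesis
      by simp
  qed
  ultimately show ?case
    using Cons ys by simp
qed

lemma max_simple_prefix_mult:
  assumes "is_max_simple_prefix x (x \<otimes> A)" and "is_max_simple_prefix y Z" "y \<preccurlyeq> A" "Z \<in> P"
  shows "is_max_simple_prefix x (x \<otimes> Z)"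
proof -
  have x: "x \<in> P" "x \<in> carrier G"
    using assms(1) positive_closed by (simp_all add: is_max_simple_prefix_def simple_iff)
  have "u \<preccurlyeq> x" if u: "simple G P D u" "u \<preccurlyeq> x \<otimes> Z" for u
  proof -
    have "u \<preccurlyeq> x \<otimes> D"
      using u(1) Garside_prec_mult_Garside[OF x(1)] prec_trans by (auto simp: simple_iff)
    then have "inv x \<otimes> u \<preccurlyeq> inv x \<otimes> (x \<otimes> D)"
      by (rule prec_lmult[OF _ inv_closed[OF x(2)]])
    moreover have "inv x \<otimes> u \<preccurlyeq> inv x \<otimes> (x \<otimes> Z)"
      using u(2) by (rule prec_lmult[OF _ inv_closed[OF x(2)]])
    ultimately have "inv x \<otimes> u \<preccurlyeq> D" "inv x \<otimes> u \<preccurlyeq> Z"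
      using x(2) assms(4) positive_closed by simp_all
    then have "inv x \<otimes> u \<preccurlyeq> y"
      using prec_max_simple_prefix assms(2,4) by blast
    then have "x \<otimes> (inv x \<otimes> u) \<preccurlyeq> x \<otimes> y"
      using x(2) by (rule prec_lmult)
    then have "u \<preccurlyeq> x \<otimes> y"
      using x(2) u(1) positive_closed by (simp add: simple_iff)
    also have "x \<otimes> y \<preccurlyeq> x \<otimes> A"
      using assms(3) x(2) by (rule prec_lmult)
    finally show ?thesis
      using assms(1) u(1) by (simp add: is_max_simple_prefix_def)
  qed
  then show ?thesis
    using assms(1,4) x prec_mult_positive by (simp add: is_max_simple_prefix_def)
qed

lemma left_greedy_snoc:
  "xs \<noteq> [] \<Longrightarrow> left_greedy xs \<Longrightarrow> left_greedy [last xs, s] \<Longrightarrow> left_greedy (xs @ [s])"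
proof (induction xs rule: list_nonempty_induct)
  case (single x)
  then show ?case
    by simp
next
  case (cons x xs)
  then have greedy: "left_greedy (xs @ [s])"
    by simp
  have "is_max_simple_prefix x (x \<otimes> lprod G xs)"
    using cons.prems by simp
  moreover have "is_max_simple_prefix (hd xs) (lprod G (xs @ [s]))"
    using left_greedy_hd[OF _ greedy] cons.hyps by simp
  moreover have "hd xs \<preccurlyeq> lprod G xs"
    using left_greedy_hd[OF cons.hyps] cons.prems by (simp add: is_max_simple_prefix_def)
  moreover have "lprod G (xs @ [s]) \<in> P"
    using greedy left_greedy_positive lprod_positive by blast
  ultimately have "is_max_simple_prefix x (x \<otimes> lprod G (xs @ [s]))"
    by (rule max_simple_prefix_mult)
  then show ?case
    using cons.prems greedy by simp
qed

lemma left_greedy_iff_nth: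
  "left_greedy xs \<longleftrightarrow>
     (\<forall>i<length xs. xs ! i \<noteq> \<one> \<and> simple G P D (xs ! i) \<and> xs ! i \<preccurlyeq> lprod G (drop i xs) \<and>
        (\<forall>u. simple G P D u \<and> u \<preccurlyeq> lprod G (drop i xs) \<longrightarrow> u \<preccurlyeq> xs ! i))"
  by (induction xs) (simp_all add: All_less_Suc2 is_max_simple_prefix_def conj_ac)

lemma lnf_iff:
  "lnf G P D X p xs \<longleftrightarrow>
     X = D [^] p \<otimes> lprod G xs \<and> D [^] p \<preccurlyeq> X \<and> (\<forall>q::int. D [^] q \<preccurlyeq> X \<longrightarrow> q \<le> p) \<and>
     left_greedy xs"
  by (simp add: lnf_def left_greedy_iff_nth)

lemma lnf_exists:
  assumes "D \<noteq> \<one>" and "X \<in> carrier G"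
  shows "\<exists>p xs. lnf G P D X p xs"
proof -
  obtain p :: int where p: "D [^] p \<preccurlyeq> X" "\<forall>q. D [^] q \<preccurlyeq> X \<longrightarrow> q \<le> p"
    using Garside_pow_max_prefix_exists[OF assms] by blast
  then obtain xs where "lprod G xs = inv (D [^] p) \<otimes> X" "left_greedy xs"
    using left_greedy_exists by (auto simp: gprec_def)
  then have "lnf G P D X p xs"
    using p assms(2) by (simp add: lnf_iff)
  then show ?thesis
    by blast
qed

lemma lnf_unique: "lnf G P D X p xs \<Longrightarrow> lnf G P D X p' xs' \<Longrightarrow> p = p' \<and> xs = xs'"
proof -
  assume L: "lnf G P D X p xs" "lnf G P D X p' xs'"
  then have "p = p'"
    unfolding lnf_iff by (meson order_antisym)
  moreover have "set xs \<subseteq> P" "set xs' \<subseteq> P"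
    using L left_greedy_positive unfolding lnf_iff by blast+
  then have "lprod G xs = lprod G xs'"
    using L \<open>p = p'\<close> lprod_positive positive_closed unfolding lnf_iff
    by (metis Units_eq Units_l_cancel int_pow_closed Garside_closed)
  ultimately show ?thesis
    using L left_greedy_unique unfolding lnf_iff by blast
qed

lemma lnf_nf:
  assumes "D \<noteq> \<one>" and "X \<in> carrier G"
  shows "lnf G P D X (ginf G P D X) (snd (nf G P D X))"
proof -
  have "\<exists>!(p, xs). lnf G P D X p xs"
    using lnf_exists[OF assms] lnf_unique by (auto intro!: ex1I)
  then have "case nf G P D X of (p, xs) \<Rightarrow> lnf G P D X p xs"
    unfolding nf_def by (rule theI')
  then show ?thesis
    by (simp add: ginf_def split: prod.splits)
qed

lemma left_weighted_left_greedy: "left_weighted G P D a b \<Longrightarrow> left_greedy [a, b]"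
  by (simp add: left_weighted_def lnf_iff)

lemma Garside_pow_ginf_prec_SSS:
  assumes "D \<noteq> \<one>" and "X \<in> carrier G" and "Y \<in> SSS G P D X"
  shows "D [^] ginf G P D X \<preccurlyeq> Y"
proof -
  have "X = conj G X \<one>"
    using assms(2) by (simp add: conj_def)
  then have "ginf G P D X \<le> ginf G P D Y"
    using assms(2,3) unfolding SSS_def conj_class_def by blast
  moreover have "Y \<in> carrier G"
    using assms(2,3) by (auto simp: SSS_def conj_class_def conj_def)
  ultimately show ?thesis
    using lnf_nf[OF assms(1)] Garside_pow_mono prec_trans unfolding lnf_iff by blast
qed

lemma simple_prec_tau_pow_hd:
  assumes "X = D [^] p \<otimes> lprod G xs" and "xs \<noteq> []" "left_greedy xs" "left_greedy [last xs, s]"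
    and "D [^] p \<preccurlyeq> conj G X s"
  shows "s \<preccurlyeq> tau_pow G D (- p) (hd xs)"
proof -
  have s: "simple G P D s" "s \<in> carrier G"
    using assms(4) positive_closed by (auto simp: is_max_simple_prefix_def simple_iff)
  have xs: "set xs \<subseteq> P"
    using assms(3) by (rule left_greedy_positive)
  then have L: "lprod G xs \<in> carrier G"
    using lprod_positive positive_closed by blast
  have "s \<otimes> D [^] p \<preccurlyeq> s \<otimes> conj G X s"
    using assms(5) s(2) by (rule prec_lmult)
  moreover have "s \<otimes> conj G X s = D [^] p \<otimes> (lprod G xs \<otimes> s)"
    using assms(1) L s(2) by (simp add: conj_def m_assoc)
  ultimately have "tau_pow G D p s \<preccurlyeq> lprod G xs \<otimes> s"
    using L s(2) prec_lmult_iff by (simp add: mult_Garside_pow)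
  moreover have "is_max_simple_prefix (hd xs) (lprod G xs \<otimes> s)"
    using left_greedy_hd[OF _ left_greedy_snoc[OF assms(2-4)]] assms(2) xs s(2)
    by (simp add: lprod_snoc)
  ultimately have "tau_pow G D p s \<preccurlyeq> hd xs"
    using tau_pow_simple s(1) by (simp add: is_max_simple_prefix_def)
  then have "tau_pow G D (- p) (tau_pow G D p s) \<preccurlyeq> tau_pow G D (- p) (hd xs)"
    by (rule tau_pow_mono)
  then show ?thesis
    using s(2) by simp
qed

end

lemma garside_group_of_garside: "garside G P D \<Longrightarrow> garside_group G P D"
proof (rule garside_group.intro)
  assume "garside G P D"
  then show "group G"
    unfolding garside_def by (elim conjE) assumption
  show "garside_group_axioms G P D"
    using \<open>garside G P D\<close> by (rule garside_group_axioms.intro)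
qed

theorem mainTheorem2:
  fixes G :: "('a,'b) monoid_scheme" and P :: "'a set" and D X s :: 'a
  assumes "garside G P D"
    and "X \<in> carrier G"
    and "X \<in> USS G P D X"
    and "clen G P D X > 0"
    and "minimal_simple G P D X X s"
    and "left_weighted G P D (phi G P D X) s"
  shows "gprec G P s (iota G P D X)"
proof -
  interpret garside_group G P D
    using assms(1) by (rule garside_group_of_garside)
  define xs where "xs = snd (nf G P D X)"
  have lw: "left_greedy [last xs, s]"
    using assms(6) left_weighted_left_greedy by (simp add: phi_def xs_def)
  then have "D \<noteq> \<one>\<^bsub>G\<^esub>"
    using Garside_neq_one by (auto simp: is_max_simple_prefix_def)
  then have "lnf G P D X (ginf G P D X) xs"
    using lnf_nf assms(2) by (simp add: xs_def)
  moreover have "xs \<noteq> []"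
    using assms(4) by (simp add: clen_def xs_def)
  moreover have "gprec G P (D [^]\<^bsub>G\<^esub> ginf G P D X) (conj G X s)"
    using Garside_pow_ginf_prec_SSS \<open>D \<noteq> \<one>\<^bsub>G\<^esub>\<close> assms(2,5)
    by (simp add: minimal_simple_def USS_def)
  ultimately have "gprec G P s (tau_pow G D (- ginf G P D X) (hd xs))"
    using lw simple_prec_tau_pow_hd unfolding lnf_iff by blast
  then show ?thesis
    by (simp add: iota_def xs_def)
qed

end
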